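(* Let $G$ be a finite group. Then the non-inverse graph $\Gamma_{NI}(G)$ is minimally connected if and only if either every non-identity element of $G$ is self-inverse, or no non-identity element of $G$ is self-inverse.
   Context: The non-inverse graph $\Gamma_{NI}(G)$ of a group $G$ is the simple undirected graph with vertex set $G$ in which two distinct elements $x,y$ are adjacent if and only if $y\neq x^{-1}$. An element $x$ is self-inverse if $x=x^{-1}$. For a connected graph $\Gamma$, a vertex cut-set is a set $S$ of vertices such that $\Gamma-S$ is disconnected or has just one vertex, and the vertex connectivity $\kappa(\Gamma)$ is the smallest size of a vertex cut-set. $\Gamma$ is minimally connected if $\kappa(\Gamma-\epsilon)=\kappa(\Gamma)-1$ for every edge $\epsilon$ of $\Gamma$. *)

theory Defs
  imports "HOL-Algebra.Group"
begin

text \<open>Simple undirected graphs given by a vertex set V and a symmetric,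
irreflexive adjacency relation E (only its restriction to V matters).\<close>

definition reachable :: "'a set \<Rightarrow> ('a \<Rightarrow> 'a \<Rightarrow> bool) \<Rightarrow> 'a \<Rightarrow> 'a \<Rightarrow> bool" where
  "reachable V E x y \<longleftrightarrow> (\<lambda>a b. a \<in> V \<and> b \<in> V \<and> E a b)\<^sup>*\<^sup>* x y"

definition graph_connected :: "'a set \<Rightarrow> ('a \<Rightarrow> 'a \<Rightarrow> bool) \<Rightarrow> bool" where
  "graph_connected V E \<longleftrightarrow> V \<noteq> {} \<and> (\<forall>x\<in>V. \<forall>y\<in>V. reachable V E x y)"

definition graph_disconnected :: "'a set \<Rightarrow> ('a \<Rightarrow> 'a \<Rightarrow> bool) \<Rightarrow> bool" where
  "graph_disconnected V E \<longleftrightarrow> (\<exists>x\<in>V. \<exists>y\<in>V. \<not> reachable V E x y)"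

definition vertex_cut_set :: "'a set \<Rightarrow> ('a \<Rightarrow> 'a \<Rightarrow> bool) \<Rightarrow> 'a set \<Rightarrow> bool" where
  "vertex_cut_set V E S \<longleftrightarrow> S \<subseteq> V \<and> (graph_disconnected (V - S) E \<or> card (V - S) = 1)"

definition vertex_connectivity :: "'a set \<Rightarrow> ('a \<Rightarrow> 'a \<Rightarrow> bool) \<Rightarrow> nat" where
  "vertex_connectivity V E = (LEAST k. \<exists>S. vertex_cut_set V E S \<and> card S = k)"

definition is_edge :: "'a set \<Rightarrow> ('a \<Rightarrow> 'a \<Rightarrow> bool) \<Rightarrow> 'a \<Rightarrow> 'a \<Rightarrow> bool" where
  "is_edge V E a b \<longleftrightarrow> a \<in> V \<and> b \<in> V \<and> a \<noteq> b \<and> E a b"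

definition delete_edge :: "('a \<Rightarrow> 'a \<Rightarrow> bool) \<Rightarrow> 'a \<Rightarrow> 'a \<Rightarrow> ('a \<Rightarrow> 'a \<Rightarrow> bool)" where
  "delete_edge E a b = (\<lambda>x y. E x y \<and> {x, y} \<noteq> {a, b})"

definition minimally_connected :: "'a set \<Rightarrow> ('a \<Rightarrow> 'a \<Rightarrow> bool) \<Rightarrow> bool" where
  "minimally_connected V E \<longleftrightarrow> graph_connected V E \<and>
     (\<forall>a b. is_edge V E a b \<longrightarrow>
        vertex_connectivity V (delete_edge E a b) = vertex_connectivity V E - 1)"

definition non_inverse_adj :: "('a, 'b) monoid_scheme \<Rightarrow> 'a \<Rightarrow> 'a \<Rightarrow> bool" where
  "non_inverse_adj G x y \<longleftrightarrow> x \<noteq> y \<and> y \<noteq> inv\<^bsub>G\<^esub> x"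

end

theory Submission
  imports Defs
begin

text \<open>In \<open>\<Gamma>\<^sub>N\<^sub>I(G)\<close> every vertex \<open>x\<close> is adjacent to everything except \<open>x\<inverse>\<close>, so an induced
subgraph on at least three vertices is connected: two non-adjacent vertices \<open>x\<close>, \<open>x\<inverse>\<close> have
every third vertex as a common neighbour. Hence the largest disconnected induced subgraphs are
the pairs \<open>{x, x\<inverse>}\<close> with \<open>x \<noteq> x\<inverse>\<close>, and \<open>\<kappa>(\<Gamma>\<^sub>N\<^sub>I(G)) = |G| - 2\<close> unless every element is
self-inverse, in which case the graph is complete and \<open>\<kappa> = |G| - 1\<close>. Deleting an edge \<open>{a, b}\<close>
makes \<open>{a, b}\<close> disconnected, and also \<open>{a, b, a\<inverse>}\<close> when \<open>a \<noteq> a\<inverse>\<close>; all larger induced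
subgraphs stay connected. So deleting an edge between two self-inverse elements gives
\<open>\<kappa> = |G| - 2\<close>, while deleting any other edge gives \<open>\<kappa> = |G| - 3\<close>. Minimal connectivity
therefore fails exactly when an edge \<open>{1, v}\<close> with \<open>v = v\<inverse> \<noteq> 1\<close> coexists with some \<open>u \<noteq> u\<inverse>\<close>.\<close>

lemma reachable_refl: "reachable W E x x"
  by (simp add: reachable_def)

lemma reachable_edge: "x \<in> W \<Longrightarrow> y \<in> W \<Longrightarrow> E x y \<Longrightarrow> reachable W E x y"
  by (auto simp: reachable_def)

lemma reachable_trans: "reachable W E x y \<Longrightarrow> reachable W E y z \<Longrightarrow> reachable W E x z"
  unfolding reachable_def by (rule rtranclp_trans)

lemma reachable_if_common_neighbour_outside:
  assumes "finite F" "card F < card W" "x \<in> W" "y \<in> W"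
    and "\<And>z. z \<in> W \<Longrightarrow> z \<notin> F \<Longrightarrow> E x z \<and> E z y"
  shows "reachable W E x y"
proof -
  have "\<not> W \<subseteq> F"
    using card_mono[OF assms(1)] assms(2) by (meson not_le)
  then obtain z where "z \<in> W" "z \<notin> F" by blast
  with assms(3-5) show ?thesis
    by (meson reachable_edge reachable_trans)
qed

lemma graph_disconnected_if_isolated:
  assumes "x \<in> W" "y \<in> W" "x \<noteq> y" "\<And>z. z \<in> W \<Longrightarrow> \<not> E x z"
  shows "graph_disconnected W E"
proof -
  have "\<not> (\<lambda>a b. a \<in> W \<and> b \<in> W \<and> E a b)\<^sup>*\<^sup>* x y"
    by (rule notI, erule converse_rtranclpE) (use assms in auto)
  with assms(1,2) show ?thesis
    unfolding graph_disconnected_def reachable_def by blast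
qed

lemma delete_edge_commute: "delete_edge E a b = delete_edge E b a"
  by (auto simp: delete_edge_def insert_commute fun_eq_iff)

text \<open>Deleting the edge \<open>{a, b}\<close> makes at most one vertex \<open>c\<close> non-adjacent to \<open>x\<close> or \<open>y\<close>.\<close>

lemma edge_partner:
  assumes "{x, y} \<noteq> {a, b}"
  obtains c where "\<And>z. {x, z} = {a, b} \<or> {z, y} = {a, b} \<Longrightarrow> z = c"
proof
  fix z assume "{x, z} = {a, b} \<or> {z, y} = {a, b}"
  with assms show "z = (if x = a \<or> y = a then b else a)"
    by (auto simp: doubleton_eq_iff)
qed

text \<open>A cut-set \<open>S\<close> leaves the induced subgraph on \<open>V - S\<close>, so \<open>\<kappa> = |V| - c\<close> when \<open>c\<close> is the largest
size of a disconnected induced subgraph (or \<open>c = 1\<close> if there is none).\<close>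

lemma vertex_connectivity_eqI:
  assumes "finite V" "D \<subseteq> V" "card D = c" "graph_disconnected D E \<or> c = 1" "1 \<le> c"
    and connected: "\<And>W. W \<subseteq> V \<Longrightarrow> c < card W \<Longrightarrow> \<not> graph_disconnected W E"
  shows "vertex_connectivity V E = card V - c"
  unfolding vertex_connectivity_def
proof (rule Least_equality)
  have "V - (V - D) = D" "card (V - D) = card V - c"
    using assms(1-3) by (auto simp: card_Diff_subset finite_subset)
  with assms(3,4) show "\<exists>S. vertex_cut_set V E S \<and> card S = card V - c"
    unfolding vertex_cut_set_def by (metis Diff_subset)
next
  fix k assume "\<exists>S. vertex_cut_set V E S \<and> card S = k"
  then obtain S where S: "S \<subseteq> V" "graph_disconnected (V - S) E \<or> card (V - S) = 1" "card S = k"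
    unfolding vertex_cut_set_def by blast
  have "card (V - S) = card V - k" "k \<le> card V"
    using S assms(1) by (auto simp: card_Diff_subset finite_subset card_mono)
  show "card V - c \<le> k"
  proof (rule ccontr)
    assume "\<not> card V - c \<le> k"
    with \<open>card (V - S) = card V - k\<close> \<open>k \<le> card V\<close> have "c < card (V - S)"
      by linarith
    with connected[of "V - S"] S(1,2) assms(5) show False
      by auto
  qed
qed

context group
begin

lemma eq_inv_sym: "x \<in> carrier G \<Longrightarrow> y \<in> carrier G \<Longrightarrow> y = inv x \<longleftrightarrow> x = inv y"
  by (metis inv_inv)

lemma non_inverse_adj_iff:
  "x \<in> carrier G \<Longrightarrow> y \<in> carrier G \<Longrightarrow> non_inverse_adj G x y \<longleftrightarrow> x \<noteq> y \<and> x \<noteq> inv y"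
  by (auto simp: non_inverse_adj_def eq_inv_sym)

lemma reachable_non_inverse:
  assumes "W \<subseteq> carrier G" "3 \<le> card W" "x \<in> W" "y \<in> W"
  shows "reachable W (non_inverse_adj G) x y"
proof (cases "x = y \<or> non_inverse_adj G x y")
  case True
  with assms show ?thesis by (meson reachable_edge reachable_refl)
next
  case False
  then have "y = inv x" by (auto simp: non_inverse_adj_def)
  show ?thesis
  proof (rule reachable_if_common_neighbour_outside[of "{x, y}"])
    show "card {x, y} < card W"
      using assms(2) by (auto simp: card_insert_if)
    fix z assume "z \<in> W" "z \<notin> {x, y}"
    moreover have "x \<in> carrier G" "z \<in> carrier G"
      using assms(1,3) \<open>z \<in> W\<close> by auto
    ultimately show "non_inverse_adj G x z \<and> non_inverse_adj G z y"
      using \<open>y = inv x\<close> by (auto simp: non_inverse_adj_def inj_on_eq_iff[OF inv_inj])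
  qed (simp_all add: assms(3,4))
qed

lemma reachable_delete_self_inverse_edge:
  assumes "W \<subseteq> carrier G" "3 \<le> card W" "x \<in> W" "y \<in> W"
    and "inv a = a" "inv b = b"
  shows "reachable W (delete_edge (non_inverse_adj G) a b) x y"
proof (cases "x = y \<or> delete_edge (non_inverse_adj G) a b x y")
  case True
  with assms show ?thesis by (meson reachable_edge reachable_refl)
next
  case False
  have xy: "x \<in> carrier G" "y \<in> carrier G" using assms by auto
  show ?thesis
  proof (rule reachable_if_common_neighbour_outside[of "{x, y}"])
    show "card {x, y} < card W"
      using assms(2) by (auto simp: card_insert_if)
    fix z assume z: "z \<in> W" "z \<notin> {x, y}"
    then have "z \<in> carrier G" using assms(1) by auto
    with xy have "y = inv z \<longleftrightarrow> z = inv y" "y = inv x \<longleftrightarrow> x = inv y"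
      by (simp_all add: eq_inv_sym)
    with z False assms(5,6) show "delete_edge (non_inverse_adj G) a b x z \<and>
        delete_edge (non_inverse_adj G) a b z y"
      unfolding delete_edge_def non_inverse_adj_def by (auto simp: doubleton_eq_iff)
  qed (simp_all add: assms(3,4))
qed

lemma reachable_delete_edge_other_pair:
  assumes "W \<subseteq> carrier G" "4 \<le> card W" "x \<in> W" "y \<in> W"
    and "x \<noteq> y" "{x, y} \<noteq> {a, b}" "b \<noteq> inv a" "a \<in> carrier G" "b \<in> carrier G"
  shows "reachable W (delete_edge (non_inverse_adj G) a b) x y"
proof (cases "delete_edge (non_inverse_adj G) a b x y")
  case True
  with assms show ?thesis by (meson reachable_edge)
next
  case False
  then have "y = inv x"
    using assms(5,6) by (auto simp: delete_edge_def non_inverse_adj_def)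
  obtain c where c: "\<And>z. {x, z} = {a, b} \<or> {z, y} = {a, b} \<Longrightarrow> z = c"
    using edge_partner[OF assms(6)] by metis
  have xy: "x \<in> carrier G" "y \<in> carrier G" using assms by auto
  show ?thesis
  proof (rule reachable_if_common_neighbour_outside[of "{x, y, c}"])
    show "card {x, y, c} < card W"
      using assms(2) by (auto simp: card_insert_if)
    fix z assume z: "z \<in> W" "z \<notin> {x, y, c}"
    then have "z \<in> carrier G" using assms(1) by auto
    have "z \<noteq> x" "z \<noteq> y" "z \<noteq> inv x"
      using z(2) \<open>y = inv x\<close> by auto
    moreover have "y \<noteq> inv z"
      using \<open>z \<noteq> x\<close> \<open>z \<in> carrier G\<close> xy(1) \<open>y = inv x\<close>
      by (simp add: inj_on_eq_iff[OF inv_inj])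
    moreover have "{x, z} \<noteq> {a, b}" "{z, y} \<noteq> {a, b}"
      using c[of z] z(2) by blast+
    ultimately show "delete_edge (non_inverse_adj G) a b x z \<and>
        delete_edge (non_inverse_adj G) a b z y"
      unfolding delete_edge_def non_inverse_adj_def by blast
  qed (simp_all add: assms(3,4))
qed

lemma reachable_delete_edge:
  assumes "W \<subseteq> carrier G" "4 \<le> card W" "x \<in> W" "y \<in> W"
    and "b \<noteq> inv a" "a \<in> carrier G" "b \<in> carrier G"
  shows "reachable W (delete_edge (non_inverse_adj G) a b) x y"
proof (cases "x = y \<or> {x, y} \<noteq> {a, b}")
  case True
  with assms show ?thesis
    using reachable_delete_edge_other_pair reachable_refl by metis
next
  case False
  have "card {a, b} < card W"
    using assms(2) by (auto simp: card_insert_if)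
  then obtain z where "z \<in> W" "z \<notin> {a, b}"
    using card_mono[of "{a, b}" W] by fastforce
  with False assms have "reachable W (delete_edge (non_inverse_adj G) a b) x z"
    "reachable W (delete_edge (non_inverse_adj G) a b) z y"
    by (auto intro!: reachable_delete_edge_other_pair simp: doubleton_eq_iff)
  then show ?thesis by (rule reachable_trans)
qed

lemma vertex_connectivity_all_self_inverse:
  assumes "finite (carrier G)" "\<forall>x\<in>carrier G. inv x = x"
  shows "vertex_connectivity (carrier G) (non_inverse_adj G) = card (carrier G) - 1"
proof (rule vertex_connectivity_eqI[OF assms(1), where D = "{\<one>}" and c = 1])
  fix W assume "W \<subseteq> carrier G"
  with assms(2) have "non_inverse_adj G x y" if "x \<in> W" "y \<in> W" "x \<noteq> y" for x y
    using that by (auto simp: non_inverse_adj_def)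
  then have "reachable W (non_inverse_adj G) x y" if "x \<in> W" "y \<in> W" for x y
    using that reachable_edge reachable_refl by metis
  then show "\<not> graph_disconnected W (non_inverse_adj G)"
    unfolding graph_disconnected_def by blast
qed simp_all

lemma vertex_connectivity_non_self_inverse:
  assumes "finite (carrier G)" "u \<in> carrier G" "u \<noteq> inv u"
  shows "vertex_connectivity (carrier G) (non_inverse_adj G) = card (carrier G) - 2"
proof (rule vertex_connectivity_eqI[OF assms(1), where D = "{u, inv u}" and c = 2])
  have "graph_disconnected {u, inv u} (non_inverse_adj G)"
    by (rule graph_disconnected_if_isolated[of u _ "inv u"])
      (use assms(3) in \<open>auto simp: non_inverse_adj_def\<close>)
  then show "graph_disconnected {u, inv u} (non_inverse_adj G) \<or> (2::nat) = 1" ..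
  show "\<not> graph_disconnected W (non_inverse_adj G)" if "W \<subseteq> carrier G" "2 < card W" for W
  proof -
    have "3 \<le> card W" using that(2) by simp
    then show ?thesis
      unfolding graph_disconnected_def using reachable_non_inverse[OF that(1)] by blast
  qed
qed (simp_all add: assms(2,3) card_insert_if)

lemma vertex_connectivity_delete_self_inverse_edge:
  assumes "finite (carrier G)" "a \<noteq> b" "inv a = a" "inv b = b" "a \<in> carrier G" "b \<in> carrier G"
  shows "vertex_connectivity (carrier G) (delete_edge (non_inverse_adj G) a b) = card (carrier G) - 2"
proof (rule vertex_connectivity_eqI[OF assms(1), where D = "{a, b}" and c = 2])
  have "graph_disconnected {a, b} (delete_edge (non_inverse_adj G) a b)"
    by (rule graph_disconnected_if_isolated[of a _ b])
      (use assms(2) in \<open>auto simp: non_inverse_adj_def delete_edge_def\<close>)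
  then show "graph_disconnected {a, b} (delete_edge (non_inverse_adj G) a b) \<or> (2::nat) = 1" ..
  show "\<not> graph_disconnected W (delete_edge (non_inverse_adj G) a b)"
    if "W \<subseteq> carrier G" "2 < card W" for W
  proof -
    have "3 \<le> card W" using that(2) by simp
    then show ?thesis
      unfolding graph_disconnected_def
      using reachable_delete_self_inverse_edge[OF that(1) _ _ _ assms(3,4)] by blast
  qed
qed (simp_all add: assms(2,5,6))

lemma vertex_connectivity_delete_edge:
  assumes "finite (carrier G)" "a \<noteq> b" "b \<noteq> inv a" "a \<noteq> inv a" "a \<in> carrier G" "b \<in> carrier G"
  shows "vertex_connectivity (carrier G) (delete_edge (non_inverse_adj G) a b) = card (carrier G) - 3"
proof (rule vertex_connectivity_eqI[OF assms(1), where D = "{inv a, a, b}" and c = 3])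
  have "graph_disconnected {inv a, a, b} (delete_edge (non_inverse_adj G) a b)"
    by (rule graph_disconnected_if_isolated[of a _ b])
      (use assms(2) in \<open>auto simp: non_inverse_adj_def delete_edge_def\<close>)
  then show "graph_disconnected {inv a, a, b} (delete_edge (non_inverse_adj G) a b) \<or> (3::nat) = 1" ..
  show "\<not> graph_disconnected W (delete_edge (non_inverse_adj G) a b)"
    if "W \<subseteq> carrier G" "3 < card W" for W
  proof -
    have "4 \<le> card W" using that(2) by simp
    then show ?thesis
      unfolding graph_disconnected_def
      using reachable_delete_edge[OF that(1) _ _ _ assms(3,5,6)] by blast
  qed
  show "card {inv a, a, b} = 3"
    using assms(2-4) by (auto simp: card_insert_if)
qed (simp_all add: assms(5,6))

lemma non_inverse_graph_connected: "graph_connected (carrier G) (non_inverse_adj G)"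
  unfolding graph_connected_def
proof (intro conjI ballI)
  fix x y assume xy: "x \<in> carrier G" "y \<in> carrier G"
  show "reachable (carrier G) (non_inverse_adj G) x y"
  proof (cases "x = y \<or> non_inverse_adj G x y")
    case True
    with xy show ?thesis by (meson reachable_edge reachable_refl)
  next
    case False
    then have "y = inv x" "x \<noteq> \<one>"
      by (auto simp: non_inverse_adj_def)
    then have "y \<noteq> \<one>"
      using xy(1) by simp
    have "non_inverse_adj G x \<one>" "non_inverse_adj G \<one> y"
      using xy(1) \<open>x \<noteq> \<one>\<close> \<open>y \<noteq> \<one>\<close>
      by (simp_all add: non_inverse_adj_iff non_inverse_adj_def[of G \<one>])
    with xy show ?thesis
      by (meson one_closed reachable_edge reachable_trans)
  qed
qed auto

lemma minimally_connected_if_all_self_inverse: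
  assumes "finite (carrier G)" "\<forall>x\<in>carrier G. inv x = x"
  shows "minimally_connected (carrier G) (non_inverse_adj G)"
  unfolding minimally_connected_def
proof (intro conjI allI impI non_inverse_graph_connected)
  fix a b assume "is_edge (carrier G) (non_inverse_adj G) a b"
  then have "a \<noteq> b" "a \<in> carrier G" "b \<in> carrier G"
    by (auto simp: is_edge_def)
  with assms show "vertex_connectivity (carrier G) (delete_edge (non_inverse_adj G) a b) =
      vertex_connectivity (carrier G) (non_inverse_adj G) - 1"
    by (simp add: vertex_connectivity_delete_self_inverse_edge vertex_connectivity_all_self_inverse)
qed

lemma minimally_connected_if_no_nontrivial_self_inverse:
  assumes "finite (carrier G)" "u \<in> carrier G" "u \<noteq> inv u"
    and no_self_inverse: "\<forall>x\<in>carrier G. x \<noteq> \<one> \<longrightarrow> x \<noteq> inv x"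
  shows "minimally_connected (carrier G) (non_inverse_adj G)"
  unfolding minimally_connected_def
proof (intro conjI allI impI non_inverse_graph_connected)
  fix a b assume "is_edge (carrier G) (non_inverse_adj G) a b"
  then have ab: "a \<noteq> b" "b \<noteq> inv a" "a \<in> carrier G" "b \<in> carrier G"
    by (auto simp: is_edge_def non_inverse_adj_def)
  have "vertex_connectivity (carrier G) (delete_edge (non_inverse_adj G) a b) = card (carrier G) - 3"
  proof (cases "a = \<one>")
    case False
    with ab no_self_inverse show ?thesis
      by (simp add: vertex_connectivity_delete_edge assms(1))
  next
    case True
    with ab have "b \<noteq> \<one>" by simp
    with ab(4) no_self_inverse have "b \<noteq> inv b" "inv b \<noteq> \<one>" by auto
    \<comment> \<open>so the deleted edge, read as \<open>{b, 1}\<close>, has a non-self-inverse endpoint\<close>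
    with True ab show ?thesis
      by (metis delete_edge_commute vertex_connectivity_delete_edge assms(1))
  qed
  with assms(1-3) show "vertex_connectivity (carrier G) (delete_edge (non_inverse_adj G) a b) =
      vertex_connectivity (carrier G) (non_inverse_adj G) - 1"
    by (simp add: vertex_connectivity_non_self_inverse)
qed

text \<open>Deleting the edge \<open>{1, v}\<close> between two self-inverse elements leaves \<open>\<kappa> = |G| - 2\<close>
unchanged; \<open>|G| \<ge> 3\<close> because \<open>1, u, u\<inverse>\<close> are distinct.\<close>

lemma not_minimally_connected:
  assumes "finite (carrier G)" "u \<in> carrier G" "u \<noteq> inv u"
    and "v \<in> carrier G" "v \<noteq> \<one>" "inv v = v"
  shows "\<not> minimally_connected (carrier G) (non_inverse_adj G)"
proof
  assume minimal: "minimally_connected (carrier G) (non_inverse_adj G)"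
  have "is_edge (carrier G) (non_inverse_adj G) \<one> v"
    using assms(4-6) by (auto simp: is_edge_def non_inverse_adj_def)
  moreover have "vertex_connectivity (carrier G) (delete_edge (non_inverse_adj G) \<one> v) =
      card (carrier G) - 2"
    using assms(1,4-6) by (intro vertex_connectivity_delete_self_inverse_edge) auto
  ultimately have "card (carrier G) - 2 = card (carrier G) - 2 - 1"
    using minimal assms(1-3) vertex_connectivity_non_self_inverse
    unfolding minimally_connected_def by metis
  moreover have "\<one> \<noteq> inv u"
    using assms(2,3) by (metis inv_one inv_inv)
  then have "card {\<one>, u, inv u} = 3"
    using assms(2,3) by (auto simp: card_insert_if)
  moreover have "card {\<one>, u, inv u} \<le> card (carrier G)"
    using assms(1,2) by (intro card_mono) auto
  ultimately show False by linarith
qed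

end

theorem mainTheorem10:
  fixes G :: "('a, 'b) monoid_scheme"
  assumes "group G" and "finite (carrier G)"
  shows "minimally_connected (carrier G) (non_inverse_adj G) \<longleftrightarrow>
           ((\<forall>x\<in>carrier G. x \<noteq> \<one>\<^bsub>G\<^esub> \<longrightarrow> x = inv\<^bsub>G\<^esub> x) \<or>
            (\<forall>x\<in>carrier G. x \<noteq> \<one>\<^bsub>G\<^esub> \<longrightarrow> x \<noteq> inv\<^bsub>G\<^esub> x))"
proof -
  interpret group G by (rule assms(1))
  have all_self_inverse: "\<forall>x\<in>carrier G. inv\<^bsub>G\<^esub> x = x"
    if "\<forall>x\<in>carrier G. x \<noteq> \<one>\<^bsub>G\<^esub> \<longrightarrow> x = inv\<^bsub>G\<^esub> x"
    using that inv_one by metis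
  show ?thesis
  proof
    assume "minimally_connected (carrier G) (non_inverse_adj G)"
    then show "(\<forall>x\<in>carrier G. x \<noteq> \<one>\<^bsub>G\<^esub> \<longrightarrow> x = inv\<^bsub>G\<^esub> x) \<or>
        (\<forall>x\<in>carrier G. x \<noteq> \<one>\<^bsub>G\<^esub> \<longrightarrow> x \<noteq> inv\<^bsub>G\<^esub> x)"
      using not_minimally_connected[OF assms(2)] by metis
  next
    assume "(\<forall>x\<in>carrier G. x \<noteq> \<one>\<^bsub>G\<^esub> \<longrightarrow> x = inv\<^bsub>G\<^esub> x) \<or>
        (\<forall>x\<in>carrier G. x \<noteq> \<one>\<^bsub>G\<^esub> \<longrightarrow> x \<noteq> inv\<^bsub>G\<^esub> x)"
    then show "minimally_connected (carrier G) (non_inverse_adj G)"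
      using minimally_connected_if_all_self_inverse[OF assms(2)] all_self_inverse
        minimally_connected_if_no_nontrivial_self_inverse[OF assms(2)] by metis
  qed
qed

end
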